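(* Let $X$ be a space, let $Y$ be an extension of $X$ with compact remainder, let $\zeta Y$ be a compactification of $Y$, and let $\phi:\beta X\to\zeta Y$ be the continuous extension of the identity of $X$. Then $Y$ is pseudocompact (i.e. $Y\in\mathscr{U}(X)$) if and only if $\mathrm{cl}_{\beta X}(\beta X\setminus\upsilon X)\subseteq\phi^{-1}[Y\setminus X]$.
   Context: All spaces are completely regular Hausdorff. $\beta X$ is the Stone–Čech compactification and $\upsilon X\subseteq\beta X$ the Hewitt realcompactification of $X$. An extension of $X$ is a space containing $X$ as a dense subspace; its remainder is $Y\setminus X$. A space is pseudocompact if every continuous real-valued function on it is bounded. $\mathscr{U}(X)$ is the set of pseudocompact extensions of $X$ with compact remainder. *)

theory Defs
  imports "HOL-Analysis.Analysis"
begin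

definition tychonoff_space :: "'a topology \<Rightarrow> bool" where
  "tychonoff_space X \<longleftrightarrow> completely_regular_space X \<and> Hausdorff_space X"

definition is_extension :: "'a topology \<Rightarrow> 'a topology \<Rightarrow> bool" where
  "is_extension X Y \<longleftrightarrow> topspace X \<subseteq> topspace Y \<and> X = subtopology Y (topspace X)
     \<and> Y closure_of (topspace X) = topspace Y"

definition is_compactification :: "'a topology \<Rightarrow> 'a topology \<Rightarrow> bool" where
  "is_compactification Y Z \<longleftrightarrow> is_extension Y Z \<and> compact_space Z \<and> Hausdorff_space Z"

definition is_stone_cech :: "'a topology \<Rightarrow> 'a topology \<Rightarrow> bool" where
  "is_stone_cech X B \<longleftrightarrow> is_compactification X B \<and>
     (\<forall>f. continuous_map X euclideanreal f \<and> bounded (f ` topspace X) \<longrightarrow>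
        (\<exists>g. continuous_map B euclideanreal g \<and> (\<forall>x\<in>topspace X. g x = f x)))"

text \<open>Hewitt realcompactification inside B = beta X: the largest subspace of B containing X
  to which every continuous real function on X extends continuously; pointwise,
  the points p of B such that every continuous real function on X extends continuously
  to the subspace X \<union> {p} of B.\<close>
definition hewitt :: "'a topology \<Rightarrow> 'a topology \<Rightarrow> 'a set" where
  "hewitt X B = {p \<in> topspace B. \<forall>f. continuous_map X euclideanreal f \<longrightarrow>
     (\<exists>g. continuous_map (subtopology B (insert p (topspace X))) euclideanreal g
          \<and> (\<forall>x\<in>topspace X. g x = f x))}"

definition pseudocompact :: "'a topology \<Rightarrow> bool" where
  "pseudocompact Y \<longleftrightarrow> (\<forall>f. continuous_map Y euclideanreal f \<longrightarrow> bounded (f ` topspace Y))"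

end

theory Submission
  imports Defs
begin

text \<open>A point p of beta X lies outside upsilon X exactly when some continuous real function on X
  is unbounded on every neighbourhood of p. If Y is pseudocompact, no such function can be unbounded
  near a point z of zeta Y away from the compact remainder K = Y - X: multiplied by a Urysohn
  function that is 1 near z and 0 near K, it would extend to an unbounded continuous function on Y.
  So phi maps beta X - upsilon X into K, and so does its closure, K being closed.
  Conversely, a continuous function h on Y unbounded on Y is unbounded on the dense subspace X, so by
  compactness it is unbounded near some p in beta X; then p lies outside upsilon X, hence
  phi p lies in Y, and h is bounded near phi p by continuity, a contradiction.\<close>

lemma bounded_image_closure_of:
  assumes "continuous_map Y euclideanreal h" "bounded (h ` S)"
  shows "bounded (h ` (Y closure_of S))"
proof -
  have "h ` (Y closure_of S) \<subseteq> closure (h ` S)"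
    using continuous_map_image_closure_subset[OF assms(1)] by simp
  then show ?thesis
    using assms(2) bounded_closure bounded_subset by blast
qed

lemma continuous_map_open_cases:
  assumes "openin Z S" "openin Z T" "topspace Z \<subseteq> S \<union> T"
    and "continuous_map (subtopology Z S) Y f" "continuous_map (subtopology Z T) Y g"
    and "\<And>x. x \<in> S \<inter> T \<Longrightarrow> f x = g x"
  shows "continuous_map Z Y (\<lambda>x. if x \<in> S then f x else g x)"
proof (rule pasting_lemma[where I = UNIV and T = "\<lambda>b. if b then S else T"
        and f = "\<lambda>b. if b then f else g"])
  fix b :: bool
  show "openin Z (if b then S else T)" "continuous_map (subtopology Z (if b then S else T)) Y (if b then f else g)"
    using assms by simp_all
next
  fix b c :: bool and x
  assume "x \<in> topspace Z \<inter> (if b then S else T) \<inter> (if c then S else T)"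
  then show "(if b then f else g) x = (if c then f else g) x"
    using assms(6) by (cases b; cases c) auto
next
  fix x assume "x \<in> topspace Z"
  then show "\<exists>b. b \<in> UNIV \<and> x \<in> (if b then S else T) \<and> (if x \<in> S then f x else g x) = (if b then f else g) x"
    using assms(3) by (cases "x \<in> S") auto
qed

lemma normal_space_cutoff_function:
  assumes "normal_space Z" "closedin Z S" "closedin Z T" "disjnt S T"
  obtains g V W where "continuous_map Z euclideanreal g"
    "openin Z V" "S \<subseteq> V" "\<And>x. x \<in> V \<Longrightarrow> g x = 0"
    "openin Z W" "T \<subseteq> W" "\<And>x. x \<in> W \<Longrightarrow> g x = 1"
proof -
  have "S \<subseteq> topspace Z - T"
    using assms(2,4) closedin_subset by (auto simp: disjnt_def)
  then obtain V where V: "openin Z V" "S \<subseteq> V" "Z closure_of V \<subseteq> topspace Z - T"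
    using normal_space_alt[THEN iffD1, OF assms(1), rule_format, of S "topspace Z - T"]
      assms(2,3) openin_diff[OF openin_topspace] by blast
  then have "T \<subseteq> topspace Z - Z closure_of V"
    using assms(3) closedin_subset by blast
  then obtain W where W: "openin Z W" "T \<subseteq> W" "Z closure_of W \<subseteq> topspace Z - Z closure_of V"
    using normal_space_alt[THEN iffD1, OF assms(1), rule_format, of T "topspace Z - Z closure_of V"]
      assms(3) openin_diff[OF openin_topspace closedin_closure_of] by blast
  obtain g where g: "continuous_map Z euclideanreal g"
    "g ` (Z closure_of V) \<subseteq> {0}" "g ` (Z closure_of W) \<subseteq> {1}"
    using Urysohn_lemma_alt[OF assms(1) closedin_closure_of closedin_closure_of, of V W 0 1] W(3)
    by (auto simp: disjnt_def)
  show thesis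
  proof (rule that[OF g(1) V(1,2) _ W(1,2)])
    show "g x = 0" if "x \<in> V" for x
      using g(2) closure_of_subset[OF openin_subset[OF V(1)]] that by blast
    show "g x = 1" if "x \<in> W" for x
      using g(3) closure_of_subset[OF openin_subset[OF W(1)]] that by blast
  qed
qed

lemma continuous_map_cutoff_times:
  assumes X: "X = subtopology Y (topspace X)" "openin Y (topspace X)"
    and V: "openin Y V" "topspace Y - topspace X \<subseteq> V"
    and f: "continuous_map X euclideanreal f"
    and g: "continuous_map Y euclideanreal g" "\<And>y. y \<in> V \<Longrightarrow> g y = 0"
  shows "continuous_map Y euclideanreal (\<lambda>y. if y \<in> topspace X then g y * f y else 0)"
proof (rule continuous_map_open_cases[OF X(2) V(1)])
  show "continuous_map (subtopology Y (topspace X)) euclideanreal (\<lambda>y. g y * f y)"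
    using f continuous_map_from_subtopology[OF g(1), of "topspace X"]
    unfolding X(1)[symmetric] by (intro continuous_map_real_mult)
qed (use V g in auto)

lemma continuous_extension_to_point:
  assumes X: "X = subtopology B (topspace X)" "topspace X \<subseteq> topspace B"
    and "Hausdorff_space B" and U: "openin B U" "q \<in> U"
    and f: "continuous_map X euclideanreal f"
    and g: "continuous_map B euclideanreal g" "\<And>x. x \<in> topspace X \<inter> U \<Longrightarrow> g x = f x"
  obtains G where "continuous_map (subtopology B (insert q (topspace X))) euclideanreal G"
    "\<And>x. x \<in> topspace X \<Longrightarrow> G x = f x"
proof (cases "q \<in> topspace X")
  case True
  then have "subtopology B (insert q (topspace X)) = X"
    using X(1) by (simp add: insert_absorb)
  then show thesis
    using that[of f] f by simp
next
  case False
  let ?S = "subtopology B (insert q (topspace X))"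
  have q: "q \<in> topspace B"
    using U openin_subset by blast
  then have top_S: "topspace ?S = insert q (topspace X)"
    using X(2) by auto
  have "closedin ?S {q}"
    using top_S Hausdorff_space_subtopology[OF \<open>Hausdorff_space B\<close>]
    by (intro closedin_Hausdorff_singleton) auto
  then have "openin ?S (topspace ?S - {q})"
    by blast
  moreover have "topspace ?S - {q} = topspace X"
    using False top_S by simp
  ultimately have X_open: "openin ?S (topspace X)"
    by simp
  have "continuous_map ?S euclideanreal (\<lambda>x. if x \<in> topspace X then f x else g x)"
  proof (rule continuous_map_open_cases[OF X_open])
    show "openin ?S (insert q (topspace X) \<inter> U)"
      using openin_subtopology_Int2[OF U(1)] by simp
    show "topspace ?S \<subseteq> topspace X \<union> (insert q (topspace X) \<inter> U)"
      unfolding top_S using U(2) by blast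
    have "subtopology ?S (topspace X) = X"
      using X(1) by (simp add: subtopology_subtopology Int_absorb1 subset_insertI)
    then show "continuous_map (subtopology ?S (topspace X)) euclideanreal f"
      using f by simp
    show "continuous_map (subtopology ?S (insert q (topspace X) \<inter> U)) euclideanreal g"
      using g(1) by (simp add: continuous_map_from_subtopology)
    show "f x = g x" if "x \<in> topspace X \<inter> (insert q (topspace X) \<inter> U)" for x
      using g(2) that by simp
  qed
  then show thesis
    using that by simp
qed

definition unbounded_near :: "'a topology \<Rightarrow> 'a set \<Rightarrow> ('a \<Rightarrow> real) \<Rightarrow> 'a \<Rightarrow> bool" where
  "unbounded_near Z S f z \<longleftrightarrow> (\<forall>U. openin Z U \<longrightarrow> z \<in> U \<longrightarrow> \<not> bounded (f ` (S \<inter> U)))"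

lemma unbounded_near_cong:
  assumes "\<And>x. x \<in> S \<Longrightarrow> f x = g x"
  shows "unbounded_near Z S f z \<longleftrightarrow> unbounded_near Z S g z"
proof -
  have "f ` (S \<inter> U) = g ` (S \<inter> U)" for U
    using assms by (intro image_cong) auto
  then show ?thesis
    unfolding unbounded_near_def by simp
qed

lemma unbounded_near_continuous_map:
  assumes unb: "unbounded_near B S f p" and "p \<in> topspace B"
    and \<phi>: "continuous_map B Z \<phi>" "\<And>x. x \<in> S \<Longrightarrow> \<phi> x = x"
  shows "unbounded_near Z S f (\<phi> p)"
  unfolding unbounded_near_def
proof (intro allI impI)
  fix U assume U: "openin Z U" "\<phi> p \<in> U"
  define P where "P = {b \<in> topspace B. \<phi> b \<in> U}"
  have "openin B P" "p \<in> P"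
    using openin_continuous_map_preimage[OF \<phi>(1) U(1)] U(2) \<open>p \<in> topspace B\<close> by (auto simp: P_def)
  then have "\<not> bounded (f ` (S \<inter> P))"
    using unb unfolding unbounded_near_def by blast
  moreover have "S \<inter> P \<subseteq> S \<inter> U"
    using \<phi>(2) by (auto simp: P_def)
  ultimately show "\<not> bounded (f ` (S \<inter> U))"
    by (meson bounded_subset image_mono)
qed

lemma continuous_map_imp_not_unbounded_near:
  assumes h: "continuous_map (subtopology Z T) euclideanreal h"
    and y: "y \<in> topspace Z \<inter> T" and "S \<subseteq> T"
  shows "\<not> unbounded_near Z S h y"
proof -
  have "openin (subtopology Z T) {x \<in> topspace (subtopology Z T). h x \<in> ball (h y) 1}"
    by (rule openin_continuous_map_preimage[OF h]) simp
  then obtain U where U: "openin Z U"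
    and U_eq: "{x \<in> topspace (subtopology Z T). h x \<in> ball (h y) 1} = U \<inter> T"
    unfolding openin_subtopology by blast
  have near: "h x \<in> ball (h y) 1" if "x \<in> U \<inter> T" for x
    using that unfolding U_eq[symmetric] by simp
  have "y \<in> U"
  proof -
    have "y \<in> {x \<in> topspace (subtopology Z T). h x \<in> ball (h y) 1}"
      using y by simp
    then show ?thesis
      unfolding U_eq by blast
  qed
  moreover have "h ` (S \<inter> U) \<subseteq> ball (h y) 1"
    using near \<open>S \<subseteq> T\<close> by auto
  then have "bounded (h ` (S \<inter> U))"
    by (rule bounded_subset[OF bounded_ball])
  ultimately show ?thesis
    unfolding unbounded_near_def using U by blast
qed

lemma compact_space_imp_unbounded_near:
  assumes "compact_space B" "S \<subseteq> topspace B" "\<not> bounded (f ` S)"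
  obtains p where "p \<in> topspace B" "unbounded_near B S f p"
proof (rule ccontr)
  assume "\<not> thesis"
  with that have "topspace B \<subseteq> \<Union>{U. openin B U \<and> bounded (f ` (S \<inter> U))}"
    unfolding unbounded_near_def by blast
  then obtain \<F> where \<F>: "finite \<F>" "\<F> \<subseteq> {U. openin B U \<and> bounded (f ` (S \<inter> U))}"
    and cover: "topspace B \<subseteq> \<Union>\<F>"
    using \<open>compact_space B\<close> unfolding compact_space_alt by (metis (no_types, lifting) mem_Collect_eq)
  have "f ` S \<subseteq> (\<Union>U\<in>\<F>. f ` (S \<inter> U))"
    using cover \<open>S \<subseteq> topspace B\<close> by blast
  moreover have "bounded (\<Union>U\<in>\<F>. f ` (S \<inter> U))"
    using \<F> by (intro bounded_UN) auto
  ultimately show False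
    using \<open>\<not> bounded (f ` S)\<close> bounded_subset by blast
qed

lemma not_in_hewitt_imp_unbounded_near:
  assumes X: "X = subtopology B (topspace X)" "topspace X \<subseteq> topspace B"
    and "Hausdorff_space B"
    and ext: "\<forall>f. continuous_map X euclideanreal f \<and> bounded (f ` topspace X) \<longrightarrow>
        (\<exists>g. continuous_map B euclideanreal g \<and> (\<forall>x\<in>topspace X. g x = f x))"
    and q: "q \<in> topspace B - hewitt X B"
  obtains f where "continuous_map X euclideanreal f" "unbounded_near B (topspace X) f q"
proof -
  obtain f where f: "continuous_map X euclideanreal f"
    and no_ext: "\<And>G. continuous_map (subtopology B (insert q (topspace X))) euclideanreal G
                  \<Longrightarrow> \<not> (\<forall>x\<in>topspace X. G x = f x)"
    using q unfolding hewitt_def by blast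
  have "unbounded_near B (topspace X) f q"
    unfolding unbounded_near_def
  proof (intro allI impI notI)
    fix U assume U: "openin B U" "q \<in> U" and "bounded (f ` (topspace X \<inter> U))"
    then obtain N where N: "\<And>x. x \<in> topspace X \<inter> U \<Longrightarrow> \<bar>f x\<bar> \<le> N"
      unfolding bounded_iff by auto
    \<comment> \<open>The truncation of f at level N extends to B and agrees with f near q.\<close>
    define f' where "f' x = max (-N) (min N (f x))" for x
    have "continuous_map X euclideanreal f'"
      unfolding f'_def by (intro continuous_intros f)
    moreover have "bounded (f' ` topspace X)"
      unfolding bounded_iff f'_def by (intro exI[of _ "\<bar>N\<bar>"]) auto
    ultimately obtain g where g: "continuous_map B euclideanreal g" "\<forall>x\<in>topspace X. g x = f' x"
      using ext by blast
    have "g x = f x" if "x \<in> topspace X \<inter> U" for x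
      using g(2) N[OF that] that by (auto simp: f'_def)
    then obtain G where "continuous_map (subtopology B (insert q (topspace X))) euclideanreal G"
      "\<And>x. x \<in> topspace X \<Longrightarrow> G x = f x"
      using continuous_extension_to_point[OF X \<open>Hausdorff_space B\<close> U f g(1)] by blast
    then show False
      using no_ext by blast
  qed
  then show thesis
    using that f by blast
qed

lemma unbounded_near_imp_not_in_hewitt:
  assumes f: "continuous_map X euclideanreal f" "unbounded_near B (topspace X) f p"
    and "p \<in> topspace B"
  shows "p \<notin> hewitt X B"
proof
  assume "p \<in> hewitt X B"
  then obtain g where g: "continuous_map (subtopology B (insert p (topspace X))) euclideanreal g"
    and "\<forall>x\<in>topspace X. g x = f x"
    using f(1) unfolding hewitt_def by blast
  then have "unbounded_near B (topspace X) g p"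
    using f(2) unbounded_near_cong[of "topspace X" g f] by simp
  moreover have "\<not> unbounded_near B (topspace X) g p"
    using \<open>p \<in> topspace B\<close> by (intro continuous_map_imp_not_unbounded_near[OF g]) auto
  ultimately show False
    by contradiction
qed

lemma pseudocompact_imp_not_unbounded_near:
  assumes "pseudocompact Y"
    and X: "X = subtopology Y (topspace X)" "openin Y (topspace X)"
    and Y: "Y = subtopology Z (topspace Y)" and "normal_space Z" "Hausdorff_space Z"
    and K: "closedin Z K" "topspace Y - topspace X \<subseteq> K"
    and z: "z \<in> topspace Z - K" and f: "continuous_map X euclideanreal f"
  shows "\<not> unbounded_near Z (topspace X) f z"
proof
  assume unb: "unbounded_near Z (topspace X) f z"
  obtain g V W where g: "continuous_map Z euclideanreal g"
    and V: "openin Z V" "K \<subseteq> V" "\<And>x. x \<in> V \<Longrightarrow> g x = 0"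
    and W: "openin Z W" "{z} \<subseteq> W" "\<And>x. x \<in> W \<Longrightarrow> g x = 1"
    using normal_space_cutoff_function[OF \<open>normal_space Z\<close> K(1),
        of "{z}"] closedin_Hausdorff_singleton[OF \<open>Hausdorff_space Z\<close>] z
    by (metis Diff_iff disjnt_insert2 disjnt_empty2)
  define H where "H y = (if y \<in> topspace X then g y * f y else 0)" for y
  have "continuous_map Y euclideanreal H"
    unfolding H_def
  proof (rule continuous_map_cutoff_times[OF X])
    show "openin Y (topspace Y \<inter> V)"
      using openin_subtopology_Int2[OF V(1), of "topspace Y"] by (simp flip: Y)
    show "continuous_map Y euclideanreal g"
      using continuous_map_from_subtopology[OF g, of "topspace Y"] by (simp flip: Y)
  qed (use K V f in auto)
  then have "bounded (H ` topspace Y)"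
    using \<open>pseudocompact Y\<close> unfolding pseudocompact_def by blast
  moreover have "topspace X \<inter> W \<subseteq> topspace Y"
    using openin_subset[OF X(2)] by blast
  moreover have "H ` (topspace X \<inter> W) = f ` (topspace X \<inter> W)"
    using W(3) by (intro image_cong) (auto simp: H_def)
  ultimately have "bounded (f ` (topspace X \<inter> W))"
    by (metis bounded_subset image_mono)
  then show False
    using unb W(1,2) unfolding unbounded_near_def by blast
qed

lemma pseudocompact_imp_closure_non_hewitt_subset:
  assumes "pseudocompact Y" "Hausdorff_space Y" "is_extension X Y"
    and K: "compactin Y (topspace Y - topspace X)"
    and "is_compactification Y Z" "is_stone_cech X B"
    and \<phi>: "continuous_map B Z \<phi>" "\<forall>x\<in>topspace X. \<phi> x = x"
  shows "B closure_of (topspace B - hewitt X B) \<subseteq> {p \<in> topspace B. \<phi> p \<in> topspace Y - topspace X}"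
proof -
  let ?K = "topspace Y - topspace X"
  have XY: "topspace X \<subseteq> topspace Y" "X = subtopology Y (topspace X)"
    using \<open>is_extension X Y\<close> unfolding is_extension_def by blast+
  have YZ: "Y = subtopology Z (topspace Y)" "compact_space Z" "Hausdorff_space Z"
    using \<open>is_compactification Y Z\<close> unfolding is_compactification_def is_extension_def by blast+
  then have "normal_space Z"
    by (simp add: compact_Hausdorff_or_regular_imp_normal_space)
  have XB: "X = subtopology B (topspace X)" "topspace X \<subseteq> topspace B" "Hausdorff_space B"
    and ext: "\<forall>f. continuous_map X euclideanreal f \<and> bounded (f ` topspace X) \<longrightarrow>
        (\<exists>g. continuous_map B euclideanreal g \<and> (\<forall>x\<in>topspace X. g x = f x))"
    using \<open>is_stone_cech X B\<close> unfolding is_stone_cech_def is_compactification_def is_extension_def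
    by blast+
  have "compactin Z ?K"
    using K compactin_subtopology[of Z "topspace Y" ?K] by (simp flip: YZ(1))
  then have K_closed: "closedin Z ?K"
    using compactin_imp_closedin[OF YZ(3)] by blast
  have "closedin Y ?K"
    using compactin_imp_closedin[OF \<open>Hausdorff_space Y\<close> K] .
  then have X_open: "openin Y (topspace X)"
    using openin_diff[OF openin_topspace, of Y ?K] XY(1) by (simp add: Diff_Diff_Int Int_absorb1)
  have "topspace B - hewitt X B \<subseteq> {p \<in> topspace B. \<phi> p \<in> ?K}"
  proof
    fix q assume q: "q \<in> topspace B - hewitt X B"
    then obtain f where f: "continuous_map X euclideanreal f" "unbounded_near B (topspace X) f q"
      using not_in_hewitt_imp_unbounded_near[OF XB ext] by blast
    then have "unbounded_near Z (topspace X) f (\<phi> q)"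
      using unbounded_near_continuous_map[OF f(2) _ \<phi>(1)] q \<phi>(2) by blast
    moreover have "\<phi> q \<in> topspace Z"
      using q continuous_map_image_subset_topspace[OF \<phi>(1)] by blast
    ultimately show "q \<in> {p \<in> topspace B. \<phi> p \<in> ?K}"
      using pseudocompact_imp_not_unbounded_near[OF \<open>pseudocompact Y\<close> XY(2) X_open YZ(1)
          \<open>normal_space Z\<close> YZ(3) K_closed order.refl _ f(1)] q
      by blast
  qed
  then show ?thesis
    by (rule closure_of_minimal[OF _ closedin_continuous_map_preimage[OF \<phi>(1) K_closed]])
qed

lemma closure_non_hewitt_subset_imp_pseudocompact:
  assumes "is_extension X Y" "Y = subtopology Z (topspace Y)"
    and B: "compact_space B" "topspace X \<subseteq> topspace B"
    and \<phi>: "continuous_map B Z \<phi>" "\<forall>x\<in>topspace X. \<phi> x = x"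
    and closure_sub: "B closure_of (topspace B - hewitt X B) \<subseteq> {p \<in> topspace B. \<phi> p \<in> topspace Y}"
  shows "pseudocompact Y"
  unfolding pseudocompact_def
proof (intro allI impI; rule ccontr)
  fix h assume h: "continuous_map Y euclideanreal h" and "\<not> bounded (h ` topspace Y)"
  have XY: "topspace X \<subseteq> topspace Y" "X = subtopology Y (topspace X)"
      "Y closure_of topspace X = topspace Y"
    using \<open>is_extension X Y\<close> unfolding is_extension_def by blast+
  then have "\<not> bounded (h ` topspace X)"
    using bounded_image_closure_of[OF h] \<open>\<not> bounded (h ` topspace Y)\<close> by metis
  then obtain p where p: "p \<in> topspace B" "unbounded_near B (topspace X) h p"
    using compact_space_imp_unbounded_near[OF B] by blast
  have "continuous_map X euclideanreal h"
    using continuous_map_from_subtopology[OF h, of "topspace X"] by (simp flip: XY(2))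
  then have "p \<in> topspace B - hewitt X B"
    using unbounded_near_imp_not_in_hewitt[OF _ p(2,1)] p(1) by blast
  then have "\<phi> p \<in> topspace Z \<inter> topspace Y"
    using closure_sub closure_of_subset[of "topspace B - hewitt X B" B]
      continuous_map_image_subset_topspace[OF \<phi>(1)] by blast
  moreover have "unbounded_near Z (topspace X) h (\<phi> p)"
    using unbounded_near_continuous_map[OF p(2,1) \<phi>(1)] \<phi>(2) by blast
  moreover have "continuous_map (subtopology Z (topspace Y)) euclideanreal h"
    using h by (simp flip: assms(2))
  ultimately show False
    using continuous_map_imp_not_unbounded_near[of Z "topspace Y" h "\<phi> p" "topspace X"] XY(1)
    by blast
qed

theorem lemma2p3:
  fixes X Y ZY BX :: "'a topology" and \<phi> :: "'a \<Rightarrow> 'a"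
  assumes "tychonoff_space X" and "tychonoff_space Y"
    and "is_extension X Y"
    and "compactin Y (topspace Y - topspace X)"
    and "is_compactification Y ZY"
    and "is_stone_cech X BX"
    and "continuous_map BX ZY \<phi>"
    and "\<forall>x\<in>topspace X. \<phi> x = x"
  shows "pseudocompact Y \<longleftrightarrow>
    BX closure_of (topspace BX - hewitt X BX)
      \<subseteq> {p \<in> topspace BX. \<phi> p \<in> topspace Y - topspace X}"
proof
  assume "pseudocompact Y"
  moreover have "Hausdorff_space Y"
    using \<open>tychonoff_space Y\<close> unfolding tychonoff_space_def by blast
  ultimately show "BX closure_of (topspace BX - hewitt X BX)
      \<subseteq> {p \<in> topspace BX. \<phi> p \<in> topspace Y - topspace X}"
    by (rule pseudocompact_imp_closure_non_hewitt_subset[OF _ _ assms(3-8)])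
next
  assume closure_sub: "BX closure_of (topspace BX - hewitt X BX)
      \<subseteq> {p \<in> topspace BX. \<phi> p \<in> topspace Y - topspace X}"
  have "Y = subtopology ZY (topspace Y)"
    using \<open>is_compactification Y ZY\<close> unfolding is_compactification_def is_extension_def by blast
  moreover have "compact_space BX" "topspace X \<subseteq> topspace BX"
    using \<open>is_stone_cech X BX\<close> unfolding is_stone_cech_def is_compactification_def is_extension_def
    by blast+
  moreover have "BX closure_of (topspace BX - hewitt X BX) \<subseteq> {p \<in> topspace BX. \<phi> p \<in> topspace Y}"
    using closure_sub by blast
  ultimately show "pseudocompact Y"
    by (rule closure_non_hewitt_subset_imp_pseudocompact[OF assms(3) _ _ _ assms(7,8)])
qed

end
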